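(* Let $G$ be a finitely generated group with finite generating set $S_G$ and let $H\neq 1$ be a finite group. Equip $H\wr G$ with the word metric with respect to $(H\setminus\{1\})\cup S_G$. If the growth function of $G$ is not bounded by a linear function, then $\mathrm{dim}_{AN}(H\wr G)=\infty$.
   Context: Wreath product: for groups $A,B$ let $A^{(B)}$ be the group of finitely supported functions $B\to A$, with $B$ acting by $(bf)(\gamma)=f(b^{-1}\gamma)$; $A\wr B$ is the set of pairs $(f,b)$ with product $(f_1,b_1)(f_2,b_2)=(f_1\cdot(b_1f_2),b_1b_2)$, with $b\in B$ identified with $(1,b)$ and $a\in A$ with $(f_a,1)$, where $f_a(1)=a$, $f_a(\gamma)=1$ for $\gamma\ne1$. Word metric w.r.t. $S$: $d(x,y)=$ length of $x^{-1}y$ in $S\cup S^{-1}$. Growth function: $\gamma(r)=\#\{g\in G:|g|_{S_G}<r\}$; boundedness by a linear function is independent of $S_G$. For a metric space $X$, $r>0$: an $r$-path is a sequence with consecutive distances $<r$; $r$-components of $Y\subseteq X$ are the classes of points joined by $r$-paths in $Y$. An $n$-dimensional control function of $X$ is $D:\mathbb{R}_+\to\mathbb{R}_+\cup\{\infty\}$ such that for each $r>0$ there is a cover $\{X_0,\dots,X_n\}$ of $X$ with every open ball $B(x,r)$ contained in some $X_i$ and every $r$-component of each $X_i$ of diameter at most $D(r)$. $\mathrm{dim}_{AN}(X)$ is the smallest $n$ such that $X$ has an $n$-dimensional control function of the form $D(r)=Cr$, $C>0$ ($\infty$ if none). *)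

theory Defs
  imports "HOL-Algebra.Algebra" "HOL-Library.Extended_Real"
begin

definition word_length :: "('a, 'm) monoid_scheme \<Rightarrow> 'a set \<Rightarrow> 'a \<Rightarrow> nat" where
  "word_length W T x =
     (LEAST n. \<exists>ws. length ws = n \<and> set ws \<subseteq> T \<union> m_inv W ` T \<and>
                    x = foldr (\<otimes>\<^bsub>W\<^esub>) ws \<one>\<^bsub>W\<^esub>)"

definition word_dist :: "('a, 'm) monoid_scheme \<Rightarrow> 'a set \<Rightarrow> 'a \<Rightarrow> 'a \<Rightarrow> real" where
  "word_dist W T x y = real (word_length W T (inv\<^bsub>W\<^esub> x \<otimes>\<^bsub>W\<^esub> y))"

definition growth :: "('a, 'm) monoid_scheme \<Rightarrow> 'a set \<Rightarrow> real \<Rightarrow> nat" where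
  "growth W T r = card {g \<in> carrier W. real (word_length W T g) < r}"

definition growth_linearly_bounded :: "('a, 'm) monoid_scheme \<Rightarrow> 'a set \<Rightarrow> bool" where
  "growth_linearly_bounded W T \<longleftrightarrow> (\<exists>a b::real. \<forall>r\<ge>0. real (growth W T r) \<le> a * r + b)"

definition wreath :: "('h, 'x) monoid_scheme \<Rightarrow> ('g, 'y) monoid_scheme \<Rightarrow> (('g \<Rightarrow> 'h) \<times> 'g) monoid" where
  "wreath H G =
    \<lparr> carrier = {(f, b). (\<forall>\<gamma>\<in>carrier G. f \<gamma> \<in> carrier H)
                      \<and> (\<forall>\<gamma>. \<gamma> \<notin> carrier G \<longrightarrow> f \<gamma> = \<one>\<^bsub>H\<^esub>)
                      \<and> finite {\<gamma> \<in> carrier G. f \<gamma> \<noteq> \<one>\<^bsub>H\<^esub>}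
                      \<and> b \<in> carrier G},
      monoid.mult = (\<lambda>(f1, b1) (f2, b2).
                ((\<lambda>\<gamma>. if \<gamma> \<in> carrier G then f1 \<gamma> \<otimes>\<^bsub>H\<^esub> f2 (inv\<^bsub>G\<^esub> b1 \<otimes>\<^bsub>G\<^esub> \<gamma>) else \<one>\<^bsub>H\<^esub>),
                 b1 \<otimes>\<^bsub>G\<^esub> b2)),
      monoid.one = (\<lambda>_. \<one>\<^bsub>H\<^esub>, \<one>\<^bsub>G\<^esub>) \<rparr>"

definition wr_base :: "('h, 'x) monoid_scheme \<Rightarrow> ('g, 'y) monoid_scheme \<Rightarrow> 'h \<Rightarrow> ('g \<Rightarrow> 'h) \<times> 'g" where
  "wr_base H G a = ((\<lambda>\<gamma>. if \<gamma> = \<one>\<^bsub>G\<^esub> then a else \<one>\<^bsub>H\<^esub>), \<one>\<^bsub>G\<^esub>)"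

definition wr_top :: "('h, 'x) monoid_scheme \<Rightarrow> ('g, 'y) monoid_scheme \<Rightarrow> 'g \<Rightarrow> ('g \<Rightarrow> 'h) \<times> 'g" where
  "wr_top H G b = ((\<lambda>_. \<one>\<^bsub>H\<^esub>), b)"

definition wr_gens :: "('h, 'x) monoid_scheme \<Rightarrow> ('g, 'y) monoid_scheme \<Rightarrow> 'g set \<Rightarrow> (('g \<Rightarrow> 'h) \<times> 'g) set" where
  "wr_gens H G S = wr_base H G ` (carrier H - {\<one>\<^bsub>H\<^esub>}) \<union> wr_top H G ` S"

definition r_connected :: "('a \<Rightarrow> 'a \<Rightarrow> real) \<Rightarrow> real \<Rightarrow> 'a set \<Rightarrow> 'a \<Rightarrow> 'a \<Rightarrow> bool" where
  "r_connected d r Y x y \<longleftrightarrow>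
     (\<exists>ps. ps \<noteq> [] \<and> hd ps = x \<and> last ps = y \<and> set ps \<subseteq> Y \<and>
           (\<forall>i. Suc i < length ps \<longrightarrow> d (nth ps i) (nth ps (Suc i)) < r))"

definition open_ball :: "'a set \<Rightarrow> ('a \<Rightarrow> 'a \<Rightarrow> real) \<Rightarrow> 'a \<Rightarrow> real \<Rightarrow> 'a set" where
  "open_ball M dist0 p rad = {q \<in> M. dist0 p q < rad}"

text \<open>D is an n-dimensional control function of (M,d).  Diameter of every
  r-component at most D(r) is written as: any two points of the component are
  at distance at most D(r).\<close>
definition control_function :: "'a set \<Rightarrow> ('a \<Rightarrow> 'a \<Rightarrow> real) \<Rightarrow> nat \<Rightarrow> (real \<Rightarrow> ereal) \<Rightarrow> bool" where
  "control_function M d n D \<longleftrightarrow>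
     (\<forall>r>0. \<exists>U :: nat \<Rightarrow> 'a set.
        (\<forall>i\<le>n. U i \<subseteq> M) \<and> (\<Union>i\<le>n. U i) = M \<and>
        (\<forall>x\<in>M. \<exists>i\<le>n. open_ball M d x r \<subseteq> U i) \<and>
        (\<forall>i\<le>n. \<forall>x y. r_connected d r (U i) x y \<longrightarrow> ereal (d x y) \<le> D r))"

definition dim_AN :: "'a set \<Rightarrow> ('a \<Rightarrow> 'a \<Rightarrow> real) \<Rightarrow> enat" where
  "dim_AN M d =
     (if \<exists>n. \<exists>C>0. control_function M d n (\<lambda>r. ereal (C * r))
      then enat (LEAST n. \<exists>C>0. control_function M d n (\<lambda>r. ereal (C * r)))
      else \<infinity>)"

end

theory Submission
  imports Defs "HOL-Analysis.Brouwer_Fixpoint"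
begin

text \<open>
  If the growth of G is superlinear, then for every K some ball of radius K in G contains d p
  elements with p of order C d K.  Arranging them in d rows of length p and lighting the first x j
  lamps of row j embeds the grid {0..p}^d into the wreath product: changing the lamp at g costs the
  conjugate g a g^-1, of length at most 2K + 1, so near grid points are mapped at distance O(d K);
  conversely, the distance of two lamp configurations is at least the number of lamps in which they
  differ, hence at least each coordinate difference.  Colour each grid point (d = n + 1) by a member
  of an n-dimensional cover at scale r ~ d K that contains the r-ball around its image.  The discrete
  Hex lemma, a consequence of Kuhn's combinatorial lemma, yields a colour class containing a chain of
  near grid points from one face of the grid to the opposite one.  Its image is an r-path inside one
  member of the cover whose endpoints are at distance about p > C r, so no control function C r
  exists.
\<close>

section \<open>Word length and growth\<close>

context group
begin

lemma foldr_mult_one: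
  assumes "set xs \<subseteq> carrier G" "y \<in> carrier G"
  shows "foldr (\<otimes>) xs \<one> \<otimes> y = foldr (\<otimes>) xs y"
  using assms by (induction xs) (auto simp: m_assoc)

lemma inv_foldr_mult:
  assumes "set xs \<subseteq> carrier G"
  shows "inv (foldr (\<otimes>) xs \<one>) = foldr (\<otimes>) (rev (map (m_inv G) xs)) \<one>"
  using assms
proof (induction xs)
  case (Cons x xs)
  have "set (rev (map (m_inv G) xs)) \<subseteq> carrier G"
    using Cons.prems by auto
  then show ?case
    using Cons by (simp add: inv_mult_group foldr_mult_one)
qed simp

lemma letters_subset_carrier: "T \<subseteq> carrier G \<Longrightarrow> T \<union> m_inv G ` T \<subseteq> carrier G"
  by auto

lemma inv_mem_letters:
  assumes "T \<subseteq> carrier G" "t \<in> T \<union> m_inv G ` T"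
  shows "inv t \<in> T \<union> m_inv G ` T"
  using assms(2)
proof
  assume "t \<in> m_inv G ` T"
  then obtain s where "s \<in> T" "t = inv s" by blast
  then show ?thesis using assms(1) by auto
qed simp

lemma word_length_le:
  assumes "set ws \<subseteq> T \<union> m_inv G ` T"
  shows "word_length G T (foldr (\<otimes>) ws \<one>) \<le> length ws"
  unfolding word_length_def using assms by (intro Least_le) blast

lemma mem_generate_imp_word:
  assumes "T \<subseteq> carrier G" "x \<in> generate G T"
  shows "\<exists>ws. set ws \<subseteq> T \<union> m_inv G ` T \<and> x = foldr (\<otimes>) ws \<one>"
  using assms(2)
proof (induction rule: generate.induct)
  case one
  show ?case by (intro exI[of _ "[]"]) simp
next
  case (incl t)
  then show ?case using assms(1) by (intro exI[of _ "[t]"]) auto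
next
  case (inv t)
  then show ?case using assms(1) by (intro exI[of _ "[inv t]"]) auto
next
  case (eng x y)
  then obtain xs ys where "set xs \<subseteq> T \<union> m_inv G ` T" "x = foldr (\<otimes>) xs \<one>"
    and "set ys \<subseteq> T \<union> m_inv G ` T" "y = foldr (\<otimes>) ys \<one>"
    by blast
  moreover have "set xs \<subseteq> carrier G" "set ys \<subseteq> carrier G"
    using calculation letters_subset_carrier[OF assms(1)] by auto
  ultimately show ?case by (intro exI[of _ "xs @ ys"]) (auto simp: foldr_mult_one)
qed

lemma obtain_minimal_word:
  assumes "T \<subseteq> carrier G" "x \<in> generate G T"
  obtains ws where "length ws = word_length G T x" "set ws \<subseteq> T \<union> m_inv G ` T"
    "x = foldr (\<otimes>) ws \<one>"
proof -
  have "\<exists>ws. length ws = word_length G T x \<and> set ws \<subseteq> T \<union> m_inv G ` T \<and> x = foldr (\<otimes>) ws \<one>"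
    unfolding word_length_def by (rule LeastI_ex) (use mem_generate_imp_word[OF assms] in blast)
  then show thesis using that by blast
qed

lemma word_length_one: "word_length G T \<one> = 0"
  using word_length_le[of "[]" T] by simp

lemma word_length_letter:
  assumes "T \<subseteq> carrier G" "t \<in> T"
  shows "word_length G T t \<le> 1"
  using word_length_le[of "[t]" T] assms by auto

lemma word_length_mult_le:
  assumes T: "T \<subseteq> carrier G" and "x \<in> generate G T" "y \<in> generate G T"
  shows "word_length G T (x \<otimes> y) \<le> word_length G T x + word_length G T y"
proof -
  obtain xs where xs: "length xs = word_length G T x" "set xs \<subseteq> T \<union> m_inv G ` T"
    "x = foldr (\<otimes>) xs \<one>"
    using obtain_minimal_word[OF T assms(2)] .
  obtain ys where ys: "length ys = word_length G T y" "set ys \<subseteq> T \<union> m_inv G ` T"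
    "y = foldr (\<otimes>) ys \<one>"
    using obtain_minimal_word[OF T assms(3)] .
  have "set xs \<subseteq> carrier G" "set ys \<subseteq> carrier G"
    using xs ys letters_subset_carrier[OF T] by auto
  then have "x \<otimes> y = foldr (\<otimes>) (xs @ ys) \<one>"
    using xs ys by (simp add: foldr_mult_one)
  then show ?thesis using word_length_le[of "xs @ ys" T] xs ys by simp
qed

lemma word_length_inv_le:
  assumes T: "T \<subseteq> carrier G" and "x \<in> generate G T"
  shows "word_length G T (inv x) \<le> word_length G T x"
proof -
  obtain xs where xs: "length xs = word_length G T x" "set xs \<subseteq> T \<union> m_inv G ` T"
    "x = foldr (\<otimes>) xs \<one>"
    using obtain_minimal_word[OF T assms(2)] .
  have "set xs \<subseteq> carrier G"
    using xs letters_subset_carrier[OF T] by auto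
  then have "inv x = foldr (\<otimes>) (rev (map (m_inv G) xs)) \<one>"
    using xs by (simp add: inv_foldr_mult)
  moreover have "set (rev (map (m_inv G) xs)) \<subseteq> T \<union> m_inv G ` T"
    using xs inv_mem_letters[OF T] by auto
  ultimately show ?thesis using word_length_le[of "rev (map (m_inv G) xs)" T] xs by simp
qed

end

lemma (in group_hom) word_length_image_le:
  assumes S: "S \<subseteq> carrier G" and hS: "h ` S \<subseteq> T" and g: "g \<in> generate G S"
  shows "word_length H T (h g) \<le> word_length G S g"
proof -
  obtain ws where ws: "length ws = word_length G S g" "set ws \<subseteq> S \<union> m_inv G ` S"
    "g = foldr (\<otimes>\<^bsub>G\<^esub>) ws \<one>\<^bsub>G\<^esub>"
    using G.obtain_minimal_word[OF S g] .
  have "h (foldr (\<otimes>\<^bsub>G\<^esub>) xs \<one>\<^bsub>G\<^esub>) = foldr (\<otimes>\<^bsub>H\<^esub>) (map h xs) \<one>\<^bsub>H\<^esub>"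
    if "set xs \<subseteq> carrier G" for xs
    using that by (induction xs) auto
  then have "h g = foldr (\<otimes>\<^bsub>H\<^esub>) (map h ws) \<one>\<^bsub>H\<^esub>"
    using ws S by auto
  moreover have "h x \<in> T \<union> m_inv H ` T" if "x \<in> S \<union> m_inv G ` S" for x
    using that
  proof
    assume "x \<in> m_inv G ` S"
    then obtain s where "s \<in> S" "x = inv\<^bsub>G\<^esub> s" by blast
    then have "s \<in> S" "h x = inv\<^bsub>H\<^esub> h s" using S by auto
    then show ?thesis using hS by blast
  qed (use hS in blast)
  then have "set (map h ws) \<subseteq> T \<union> m_inv H ` T"
    unfolding set_map using ws(2) by blast
  ultimately show ?thesis using H.word_length_le[of "map h ws" T] ws by simp
qed

lemma not_linearly_bounded_obtain_ball:
  fixes a b :: real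
  assumes "\<not> growth_linearly_bounded G S" "0 \<le> a"
  obtains K :: nat and B where "B \<subseteq> carrier G" "finite B" "\<forall>g\<in>B. word_length G S g \<le> K"
    "a * K + b < card B"
proof -
  obtain R where R: "0 \<le> R" "a * R + (a + \<bar>b\<bar>) < real (growth G S R)"
    using assms(1) unfolding growth_linearly_bounded_def by (meson not_le)
  define B where "B = {g \<in> carrier G. real (word_length G S g) < R}"
  have card_B: "a * R + (a + \<bar>b\<bar>) < card B"
    using R(2) by (simp add: growth_def B_def)
  moreover have "0 \<le> a * R + (a + \<bar>b\<bar>)"
    using R(1) assms(2) by simp
  ultimately have "0 < card B"
    by linarith
  then have "finite B"
    by (simp add: card_gt_0_iff)
  moreover have "word_length G S g \<le> nat \<lceil>R\<rceil>" if "g \<in> B" for g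
  proof -
    have "real (word_length G S g) < R"
      using that by (simp add: B_def)
    then have "real (word_length G S g) \<le> real (nat \<lceil>R\<rceil>)"
      using real_nat_ceiling_ge[of R] by linarith
    then show ?thesis
      by (simp only: of_nat_le_iff)
  qed
  moreover have "a * nat \<lceil>R\<rceil> + b < card B"
  proof -
    have "real (nat \<lceil>R\<rceil>) \<le> R + 1"
      using R(1) by linarith
    then have "a * nat \<lceil>R\<rceil> \<le> a * R + a"
      using assms(2) by (metis distrib_left mult.right_neutral mult_left_mono)
    then show ?thesis
      using card_B by linarith
  qed
  ultimately show thesis
    using that[of B "nat \<lceil>R\<rceil>"] by (simp add: B_def)
qed

section \<open>The wreath product\<close>

lemma wreath_mult:
  "(f1, b1) \<otimes>\<^bsub>wreath H G\<^esub> (f2, b2) =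
   ((\<lambda>\<gamma>. if \<gamma> \<in> carrier G then f1 \<gamma> \<otimes>\<^bsub>H\<^esub> f2 (inv\<^bsub>G\<^esub> b1 \<otimes>\<^bsub>G\<^esub> \<gamma>) else \<one>\<^bsub>H\<^esub>), b1 \<otimes>\<^bsub>G\<^esub> b2)"
  by (simp add: wreath_def)

lemma wreath_one: "\<one>\<^bsub>wreath H G\<^esub> = (\<lambda>_. \<one>\<^bsub>H\<^esub>, \<one>\<^bsub>G\<^esub>)"
  by (simp add: wreath_def)

lemma mem_wreath_carrier:
  "(f, b) \<in> carrier (wreath H G) \<longleftrightarrow>
   (\<forall>\<gamma>\<in>carrier G. f \<gamma> \<in> carrier H) \<and> (\<forall>\<gamma>. \<gamma> \<notin> carrier G \<longrightarrow> f \<gamma> = \<one>\<^bsub>H\<^esub>) \<and>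
   finite {\<gamma> \<in> carrier G. f \<gamma> \<noteq> \<one>\<^bsub>H\<^esub>} \<and> b \<in> carrier G"
  by (simp add: wreath_def)

locale wreath_product = G: group G + H: group H
  for G :: "('g, 'x) monoid_scheme" and H :: "('h, 'y) monoid_scheme"
begin

abbreviation Wr :: "(('g \<Rightarrow> 'h) \<times> 'g) monoid" where "Wr \<equiv> wreath H G"

definition lamp_support :: "('g \<Rightarrow> 'h) \<Rightarrow> 'g set" where
  "lamp_support f = {\<gamma> \<in> carrier G. f \<gamma> \<noteq> \<one>\<^bsub>H\<^esub>}"

lemma lamp_support_mult_subset:
  assumes "b1 \<in> carrier G"
  shows "lamp_support (fst ((f1, b1) \<otimes>\<^bsub>Wr\<^esub> (f2, b2))) \<subseteq>
    lamp_support f1 \<union> (\<lambda>\<delta>. b1 \<otimes>\<^bsub>G\<^esub> \<delta>) ` lamp_support f2"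
proof
  fix \<gamma> assume "\<gamma> \<in> lamp_support (fst ((f1, b1) \<otimes>\<^bsub>Wr\<^esub> (f2, b2)))"
  then have \<gamma>: "\<gamma> \<in> carrier G" "f1 \<gamma> \<otimes>\<^bsub>H\<^esub> f2 (inv\<^bsub>G\<^esub> b1 \<otimes>\<^bsub>G\<^esub> \<gamma>) \<noteq> \<one>\<^bsub>H\<^esub>"
    by (auto simp: lamp_support_def wreath_mult)
  show "\<gamma> \<in> lamp_support f1 \<union> (\<lambda>\<delta>. b1 \<otimes>\<^bsub>G\<^esub> \<delta>) ` lamp_support f2"
  proof (cases "f1 \<gamma> = \<one>\<^bsub>H\<^esub>")
    case True
    have "\<gamma> = b1 \<otimes>\<^bsub>G\<^esub> (inv\<^bsub>G\<^esub> b1 \<otimes>\<^bsub>G\<^esub> \<gamma>)"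
      using \<gamma>(1) assms by (simp add: G.m_assoc[symmetric])
    moreover have "inv\<^bsub>G\<^esub> b1 \<otimes>\<^bsub>G\<^esub> \<gamma> \<in> lamp_support f2"
      using True \<gamma> assms by (auto simp: lamp_support_def)
    ultimately show ?thesis by blast
  qed (use \<gamma> in \<open>simp add: lamp_support_def\<close>)
qed

lemma lamp_support_inv_subset:
  assumes "b \<in> carrier G"
  shows "lamp_support (\<lambda>\<gamma>. if \<gamma> \<in> carrier G then inv\<^bsub>H\<^esub> (f (b \<otimes>\<^bsub>G\<^esub> \<gamma>)) else \<one>\<^bsub>H\<^esub>) \<subseteq>
    (\<lambda>\<delta>. inv\<^bsub>G\<^esub> b \<otimes>\<^bsub>G\<^esub> \<delta>) ` lamp_support f"
proof
  fix \<gamma>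
  assume "\<gamma> \<in> lamp_support (\<lambda>\<gamma>. if \<gamma> \<in> carrier G then inv\<^bsub>H\<^esub> (f (b \<otimes>\<^bsub>G\<^esub> \<gamma>)) else \<one>\<^bsub>H\<^esub>)"
  then have \<gamma>: "\<gamma> \<in> carrier G" "f (b \<otimes>\<^bsub>G\<^esub> \<gamma>) \<noteq> \<one>\<^bsub>H\<^esub>"
    by (auto simp: lamp_support_def)
  have "\<gamma> = inv\<^bsub>G\<^esub> b \<otimes>\<^bsub>G\<^esub> (b \<otimes>\<^bsub>G\<^esub> \<gamma>)"
    using \<gamma>(1) assms by (simp add: G.m_assoc[symmetric])
  moreover have "b \<otimes>\<^bsub>G\<^esub> \<gamma> \<in> lamp_support f"
    using \<gamma> assms by (simp add: lamp_support_def)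
  ultimately show "\<gamma> \<in> (\<lambda>\<delta>. inv\<^bsub>G\<^esub> b \<otimes>\<^bsub>G\<^esub> \<delta>) ` lamp_support f"
    by blast
qed

lemma wreath_mult_closed:
  assumes "x \<in> carrier Wr" "y \<in> carrier Wr"
  shows "x \<otimes>\<^bsub>Wr\<^esub> y \<in> carrier Wr"
proof -
  obtain f1 b1 f2 b2 where xy: "x = (f1, b1)" "y = (f2, b2)"
    by (cases x, cases y)
  have "lamp_support (fst (x \<otimes>\<^bsub>Wr\<^esub> y)) \<subseteq> lamp_support f1 \<union> (\<lambda>\<delta>. b1 \<otimes>\<^bsub>G\<^esub> \<delta>) ` lamp_support f2"
    using lamp_support_mult_subset[of b1 f1 f2 b2] assms xy by (simp add: mem_wreath_carrier)
  moreover have "finite (lamp_support f1 \<union> (\<lambda>\<delta>. b1 \<otimes>\<^bsub>G\<^esub> \<delta>) ` lamp_support f2)"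
    using assms xy by (simp add: mem_wreath_carrier lamp_support_def)
  ultimately have "finite (lamp_support (fst (x \<otimes>\<^bsub>Wr\<^esub> y)))"
    by (rule finite_subset)
  then show ?thesis
    using assms xy by (auto simp: mem_wreath_carrier wreath_mult lamp_support_def)
qed

lemma wreath_assoc:
  assumes "x \<in> carrier Wr" "y \<in> carrier Wr" "z \<in> carrier Wr"
  shows "x \<otimes>\<^bsub>Wr\<^esub> y \<otimes>\<^bsub>Wr\<^esub> z = x \<otimes>\<^bsub>Wr\<^esub> (y \<otimes>\<^bsub>Wr\<^esub> z)"
proof -
  obtain f1 b1 f2 b2 f3 b3 where xyz: "x = (f1, b1)" "y = (f2, b2)" "z = (f3, b3)"
    by (cases x, cases y, cases z)
  have b: "b1 \<in> carrier G" "b2 \<in> carrier G" "b3 \<in> carrier G"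
    and f: "\<And>\<gamma>. \<gamma> \<in> carrier G \<Longrightarrow> f1 \<gamma> \<in> carrier H \<and> f2 \<gamma> \<in> carrier H \<and> f3 \<gamma> \<in> carrier H"
    using assms xyz by (auto simp: mem_wreath_carrier)
  have shift: "inv\<^bsub>G\<^esub> (b1 \<otimes>\<^bsub>G\<^esub> b2) \<otimes>\<^bsub>G\<^esub> \<gamma> = inv\<^bsub>G\<^esub> b2 \<otimes>\<^bsub>G\<^esub> (inv\<^bsub>G\<^esub> b1 \<otimes>\<^bsub>G\<^esub> \<gamma>)"
    if "\<gamma> \<in> carrier G" for \<gamma>
    using b that by (simp add: G.inv_mult_group G.m_assoc)
  show ?thesis
    unfolding xyz wreath_mult using b f shift by (auto simp: G.m_assoc H.m_assoc intro!: ext)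
qed

lemma wreath_inverse_mem:
  assumes "(f, b) \<in> carrier Wr"
  shows "(\<lambda>\<gamma>. if \<gamma> \<in> carrier G then inv\<^bsub>H\<^esub> (f (b \<otimes>\<^bsub>G\<^esub> \<gamma>)) else \<one>\<^bsub>H\<^esub>, inv\<^bsub>G\<^esub> b) \<in> carrier Wr"
proof -
  let ?f = "\<lambda>\<gamma>. if \<gamma> \<in> carrier G then inv\<^bsub>H\<^esub> (f (b \<otimes>\<^bsub>G\<^esub> \<gamma>)) else \<one>\<^bsub>H\<^esub>"
  have "lamp_support ?f \<subseteq> (\<lambda>\<delta>. inv\<^bsub>G\<^esub> b \<otimes>\<^bsub>G\<^esub> \<delta>) ` lamp_support f"
    using lamp_support_inv_subset assms by (simp add: mem_wreath_carrier)
  moreover have "finite ((\<lambda>\<delta>. inv\<^bsub>G\<^esub> b \<otimes>\<^bsub>G\<^esub> \<delta>) ` lamp_support f)"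
    using assms by (simp add: mem_wreath_carrier lamp_support_def)
  ultimately have "finite (lamp_support ?f)"
    by (rule finite_subset)
  then show ?thesis
    using assms by (auto simp: mem_wreath_carrier lamp_support_def)
qed

lemma wreath_inverse_l_inv:
  assumes "(f, b) \<in> carrier Wr"
  shows "(\<lambda>\<gamma>. if \<gamma> \<in> carrier G then inv\<^bsub>H\<^esub> (f (b \<otimes>\<^bsub>G\<^esub> \<gamma>)) else \<one>\<^bsub>H\<^esub>, inv\<^bsub>G\<^esub> b) \<otimes>\<^bsub>Wr\<^esub> (f, b)
    = \<one>\<^bsub>Wr\<^esub>"
  using assms
  by (auto simp: mem_wreath_carrier wreath_mult wreath_one G.m_assoc[symmetric] intro!: ext)

lemma group_wreath: "group Wr"
proof (rule groupI)
  show "x \<otimes>\<^bsub>Wr\<^esub> y \<in> carrier Wr" if "x \<in> carrier Wr" "y \<in> carrier Wr" for x y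
    using that by (rule wreath_mult_closed)
  show "\<one>\<^bsub>Wr\<^esub> \<in> carrier Wr"
    by (simp add: wreath_one mem_wreath_carrier)
  show "x \<otimes>\<^bsub>Wr\<^esub> y \<otimes>\<^bsub>Wr\<^esub> z = x \<otimes>\<^bsub>Wr\<^esub> (y \<otimes>\<^bsub>Wr\<^esub> z)"
    if "x \<in> carrier Wr" "y \<in> carrier Wr" "z \<in> carrier Wr" for x y z
    using that by (rule wreath_assoc)
  show "\<one>\<^bsub>Wr\<^esub> \<otimes>\<^bsub>Wr\<^esub> x = x" if "x \<in> carrier Wr" for x
    using that by (cases x) (auto simp: wreath_one wreath_mult mem_wreath_carrier intro!: ext)
  show "\<exists>y\<in>carrier Wr. y \<otimes>\<^bsub>Wr\<^esub> x = \<one>\<^bsub>Wr\<^esub>" if "x \<in> carrier Wr" for x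
    using that wreath_inverse_mem wreath_inverse_l_inv by (cases x) blast
qed

sublocale Wr: group Wr
  by (rule group_wreath)

lemma wreath_inv:
  assumes "(f, b) \<in> carrier Wr"
  shows "inv\<^bsub>Wr\<^esub> (f, b) = (\<lambda>\<gamma>. if \<gamma> \<in> carrier G then inv\<^bsub>H\<^esub> (f (b \<otimes>\<^bsub>G\<^esub> \<gamma>)) else \<one>\<^bsub>H\<^esub>, inv\<^bsub>G\<^esub> b)"
  using Wr.inv_equality[OF wreath_inverse_l_inv[OF assms] assms wreath_inverse_mem[OF assms]] .

lemma card_lamp_support_mult_le:
  assumes "x \<in> carrier Wr" "y \<in> carrier Wr"
  shows "card (lamp_support (fst (x \<otimes>\<^bsub>Wr\<^esub> y)))
    \<le> card (lamp_support (fst x)) + card (lamp_support (fst y))"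
proof -
  obtain f1 b1 f2 b2 where xy: "x = (f1, b1)" "y = (f2, b2)"
    by (cases x, cases y)
  have fin: "finite (lamp_support f1)" "finite (lamp_support f2)" and b1: "b1 \<in> carrier G"
    using assms xy by (simp_all add: mem_wreath_carrier lamp_support_def)
  have "card (lamp_support (fst (x \<otimes>\<^bsub>Wr\<^esub> y)))
      \<le> card (lamp_support f1 \<union> (\<lambda>\<delta>. b1 \<otimes>\<^bsub>G\<^esub> \<delta>) ` lamp_support f2)"
    using lamp_support_mult_subset[OF b1, of f1 f2 b2] fin xy by (intro card_mono) auto
  also have "\<dots> \<le> card (lamp_support f1) + card ((\<lambda>\<delta>. b1 \<otimes>\<^bsub>G\<^esub> \<delta>) ` lamp_support f2)"
    by (rule card_Un_le)
  also have "\<dots> \<le> card (lamp_support f1) + card (lamp_support f2)"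
    using card_image_le[OF fin(2)] by simp
  finally show ?thesis using xy by simp
qed

lemma card_lamp_support_inv_le:
  assumes "x \<in> carrier Wr"
  shows "card (lamp_support (fst (inv\<^bsub>Wr\<^esub> x))) \<le> card (lamp_support (fst x))"
proof -
  obtain f b where x: "x = (f, b)" by (cases x)
  have fin: "finite (lamp_support f)" and b: "b \<in> carrier G"
    using assms x by (simp_all add: mem_wreath_carrier lamp_support_def)
  have "card (lamp_support (fst (inv\<^bsub>Wr\<^esub> x))) \<le> card ((\<lambda>\<delta>. inv\<^bsub>G\<^esub> b \<otimes>\<^bsub>G\<^esub> \<delta>) ` lamp_support f)"
    using lamp_support_inv_subset[OF b, of f] fin assms x by (intro card_mono) (auto simp: wreath_inv)
  also have "\<dots> \<le> card (lamp_support f)"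
    by (rule card_image_le[OF fin])
  finally show ?thesis using x by simp
qed

lemma wr_top_hom: "wr_top H G \<in> hom G Wr"
  by (rule homI) (auto simp: wr_top_def wreath_mult mem_wreath_carrier intro!: ext)

lemma wr_base_mem: "a \<in> carrier H \<Longrightarrow> wr_base H G a \<in> carrier Wr"
  by (auto simp: wr_base_def mem_wreath_carrier)

lemma wr_gens_subset: "S \<subseteq> carrier G \<Longrightarrow> wr_gens H G S \<subseteq> carrier Wr"
  using wr_top_hom wr_base_mem by (auto simp: wr_gens_def hom_def)

lemma card_lamp_support_letter_le:
  assumes S: "S \<subseteq> carrier G" and t: "t \<in> wr_gens H G S \<union> m_inv Wr ` wr_gens H G S"
  shows "card (lamp_support (fst t)) \<le> 1"
proof -
  have gen: "card (lamp_support (fst s)) \<le> 1" if "s \<in> wr_gens H G S" for s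
  proof -
    have "lamp_support (fst s) \<subseteq> {\<one>\<^bsub>G\<^esub>}"
      using that by (auto simp: wr_gens_def wr_top_def wr_base_def lamp_support_def)
    then show ?thesis
      using card_mono[of "{\<one>\<^bsub>G\<^esub>}"] by fastforce
  qed
  from t show ?thesis
  proof
    assume "t \<in> m_inv Wr ` wr_gens H G S"
    then obtain s where "s \<in> wr_gens H G S" "t = inv\<^bsub>Wr\<^esub> s" by blast
    then show ?thesis
      using gen card_lamp_support_inv_le wr_gens_subset[OF S] by (meson order_trans subsetD)
  qed (rule gen)
qed

lemma card_lamp_support_le_word_length:
  assumes S: "S \<subseteq> carrier G" and z: "z \<in> generate Wr (wr_gens H G S)"
  shows "card (lamp_support (fst z)) \<le> word_length Wr (wr_gens H G S) z"
proof -
  let ?L = "wr_gens H G S \<union> m_inv Wr ` wr_gens H G S"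
  have letters: "?L \<subseteq> carrier Wr"
    using Wr.letters_subset_carrier[OF wr_gens_subset[OF S]] .
  have bound: "card (lamp_support (fst (foldr (\<otimes>\<^bsub>Wr\<^esub>) ws \<one>\<^bsub>Wr\<^esub>))) \<le> length ws"
    if "set ws \<subseteq> ?L" for ws
    using that
  proof (induction ws)
    case Nil
    then show ?case by (simp add: wreath_one lamp_support_def)
  next
    case (Cons t ws)
    have "t \<in> carrier Wr" "foldr (\<otimes>\<^bsub>Wr\<^esub>) ws \<one>\<^bsub>Wr\<^esub> \<in> carrier Wr"
      using Cons.prems letters by (auto intro: Wr.multlist_closed)
    then show ?case
      using card_lamp_support_mult_le card_lamp_support_letter_le[OF S, of t] Cons
      by fastforce
  qed
  obtain ws where ws: "length ws = word_length Wr (wr_gens H G S) z" "set ws \<subseteq> ?L"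
    "z = foldr (\<otimes>\<^bsub>Wr\<^esub>) ws \<one>\<^bsub>Wr\<^esub>"
    using Wr.obtain_minimal_word[OF wr_gens_subset[OF S] z] .
  show ?thesis
    using bound[OF ws(2)] ws(1,3) by simp
qed

end

section \<open>Lamp configurations and the word metric\<close>

locale wreath_word_metric = wreath_product G H
  for G :: "('g, 'x) monoid_scheme" and H :: "('h, 'y) monoid_scheme" +
  fixes S :: "'g set"
  assumes S_subset: "S \<subseteq> carrier G" and S_generates: "generate G S = carrier G"
begin

abbreviation gens :: "(('g \<Rightarrow> 'h) \<times> 'g) set" where "gens \<equiv> wr_gens H G S"

definition lamp_config :: "'h \<Rightarrow> 'g set \<Rightarrow> ('g \<Rightarrow> 'h) \<times> 'g" where
  "lamp_config a A = (\<lambda>\<gamma>. if \<gamma> \<in> A then a else \<one>\<^bsub>H\<^esub>, \<one>\<^bsub>G\<^esub>)"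

lemma lamps_mult:
  "(F, \<one>\<^bsub>G\<^esub>) \<otimes>\<^bsub>Wr\<^esub> (F', \<one>\<^bsub>G\<^esub>) =
   (\<lambda>\<gamma>. if \<gamma> \<in> carrier G then F \<gamma> \<otimes>\<^bsub>H\<^esub> F' \<gamma> else \<one>\<^bsub>H\<^esub>, \<one>\<^bsub>G\<^esub>)"
  by (auto simp: wreath_mult intro!: ext)

lemma inv_lamps_mult:
  assumes "(F, \<one>\<^bsub>G\<^esub>) \<in> carrier Wr"
  shows "inv\<^bsub>Wr\<^esub> (F, \<one>\<^bsub>G\<^esub>) \<otimes>\<^bsub>Wr\<^esub> (F', \<one>\<^bsub>G\<^esub>) =
    (\<lambda>\<gamma>. if \<gamma> \<in> carrier G then inv\<^bsub>H\<^esub> F \<gamma> \<otimes>\<^bsub>H\<^esub> F' \<gamma> else \<one>\<^bsub>H\<^esub>, \<one>\<^bsub>G\<^esub>)"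
  using assms by (auto simp: wreath_inv wreath_mult intro!: ext)

lemma single_lamp_eq:
  assumes g: "g \<in> carrier G" and a: "a \<in> carrier H"
  shows "lamp_config a {g} = wr_top H G g \<otimes>\<^bsub>Wr\<^esub> wr_base H G a \<otimes>\<^bsub>Wr\<^esub> wr_top H G (inv\<^bsub>G\<^esub> g)"
proof -
  have "inv\<^bsub>G\<^esub> g \<otimes>\<^bsub>G\<^esub> \<gamma> = \<one>\<^bsub>G\<^esub> \<longleftrightarrow> \<gamma> = g" if "\<gamma> \<in> carrier G" for \<gamma>
    using G.inv_solve_left'[of "\<one>\<^bsub>G\<^esub>" g \<gamma>] that g by auto
  then show ?thesis
    using g a by (auto simp: lamp_config_def wr_top_def wr_base_def wreath_mult intro!: ext)
qed

lemma lamps_remove_point: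
  assumes F: "(F, \<one>\<^bsub>G\<^esub>) \<in> carrier Wr" and g: "g \<in> carrier G"
  shows "(F, \<one>\<^bsub>G\<^esub>) = (F(g := \<one>\<^bsub>H\<^esub>), \<one>\<^bsub>G\<^esub>) \<otimes>\<^bsub>Wr\<^esub> lamp_config (F g) {g}"
  using assms by (auto simp: lamps_mult lamp_config_def mem_wreath_carrier intro!: ext)

lemma lamps_remove_point_mem:
  assumes "(F, \<one>\<^bsub>G\<^esub>) \<in> carrier Wr"
  shows "(F(g := \<one>\<^bsub>H\<^esub>), \<one>\<^bsub>G\<^esub>) \<in> carrier Wr"
proof -
  have "finite {\<gamma> \<in> carrier G. F \<gamma> \<noteq> \<one>\<^bsub>H\<^esub>}"
    using assms by (simp add: mem_wreath_carrier)
  then have "finite {\<gamma> \<in> carrier G. (F(g := \<one>\<^bsub>H\<^esub>)) \<gamma> \<noteq> \<one>\<^bsub>H\<^esub>}"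
    by (rule rev_finite_subset) auto
  then show ?thesis
    using assms by (simp add: mem_wreath_carrier)
qed

lemma wr_top_mem_generate:
  assumes "g \<in> carrier G"
  shows "wr_top H G g \<in> generate Wr gens"
proof -
  interpret top: group_hom G Wr "wr_top H G"
    using wr_top_hom by unfold_locales
  have "wr_top H G g \<in> generate Wr (wr_top H G ` S)"
    using top.generate_img[OF S_subset] S_generates assms by simp
  moreover have "wr_top H G ` S \<subseteq> gens"
    by (auto simp: wr_gens_def)
  ultimately show ?thesis
    using Wr.mono_generate by blast
qed

lemma wr_base_mem_generate:
  assumes "a \<in> carrier H"
  shows "wr_base H G a \<in> generate Wr gens"
proof (cases "a = \<one>\<^bsub>H\<^esub>")
  case True
  then have "wr_base H G a = \<one>\<^bsub>Wr\<^esub>"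
    by (auto simp: wr_base_def wreath_one)
  then show ?thesis by (simp add: generate.one)
next
  case False
  then show ?thesis
    using assms by (auto simp: wr_gens_def intro: generate.incl)
qed

lemma single_lamp_mem_generate:
  assumes "g \<in> carrier G" "a \<in> carrier H"
  shows "lamp_config a {g} \<in> generate Wr gens"
  unfolding single_lamp_eq[OF assms]
  using assms wr_top_mem_generate wr_base_mem_generate by (intro generate.eng) auto

lemma lamps_mem_generate:
  assumes "finite P" "lamp_support F \<subseteq> P" "(F, \<one>\<^bsub>G\<^esub>) \<in> carrier Wr"
  shows "(F, \<one>\<^bsub>G\<^esub>) \<in> generate Wr gens"
  using assms
proof (induction P arbitrary: F rule: finite_induct)
  case empty
  then have "(F, \<one>\<^bsub>G\<^esub>) = \<one>\<^bsub>Wr\<^esub>"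
    by (auto simp: lamp_support_def wreath_one mem_wreath_carrier intro!: ext)
  then show ?case by (simp add: generate.one)
next
  case (insert g P)
  show ?case
  proof (cases "g \<in> lamp_support F")
    case True
    then have g: "g \<in> carrier G" "F g \<in> carrier H"
      using insert.prems by (auto simp: lamp_support_def mem_wreath_carrier)
    have "lamp_support (F(g := \<one>\<^bsub>H\<^esub>)) \<subseteq> P"
      using insert.prems(1) by (auto simp: lamp_support_def)
    then have "(F(g := \<one>\<^bsub>H\<^esub>), \<one>\<^bsub>G\<^esub>) \<in> generate Wr gens"
      using insert.IH lamps_remove_point_mem[OF insert.prems(2)] by blast
    then show ?thesis
      using lamps_remove_point[OF insert.prems(2) g(1)] single_lamp_mem_generate[OF g]
      by (metis generate.eng)
  next
    case False
    then show ?thesis using insert by blast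
  qed
qed

lemma generate_wreath: "generate Wr gens = carrier Wr"
proof
  show "generate Wr gens \<subseteq> carrier Wr"
    using Wr.generate_in_carrier[OF wr_gens_subset[OF S_subset]] by blast
  show "carrier Wr \<subseteq> generate Wr gens"
  proof
    fix x assume x: "x \<in> carrier Wr"
    obtain F b where Fb: "x = (F, b)" by (cases x)
    have b: "b \<in> carrier G" and "(F, \<one>\<^bsub>G\<^esub>) \<in> carrier Wr"
      using x Fb by (auto simp: mem_wreath_carrier)
    then have "(F, \<one>\<^bsub>G\<^esub>) \<in> generate Wr gens"
      using x Fb
      by (intro lamps_mem_generate[of "lamp_support F"]) (auto simp: mem_wreath_carrier lamp_support_def)
    moreover have "x = (F, \<one>\<^bsub>G\<^esub>) \<otimes>\<^bsub>Wr\<^esub> wr_top H G b"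
      using x Fb by (auto simp: wr_top_def wreath_mult mem_wreath_carrier intro!: ext)
    ultimately show "x \<in> generate Wr gens"
      using wr_top_mem_generate[OF b] by (simp add: generate.eng)
  qed
qed

lemma word_length_wreath_mult_le:
  assumes "x \<in> carrier Wr" "y \<in> carrier Wr"
  shows "word_length Wr gens (x \<otimes>\<^bsub>Wr\<^esub> y) \<le> word_length Wr gens x + word_length Wr gens y"
  using Wr.word_length_mult_le[OF wr_gens_subset[OF S_subset]] assms generate_wreath by simp

lemma word_length_single_lamp_le:
  assumes g: "g \<in> carrier G" and a: "a \<in> carrier H"
  shows "word_length Wr gens (lamp_config a {g}) \<le> 2 * word_length G S g + 1"
proof -
  interpret top: group_hom G Wr "wr_top H G"
    using wr_top_hom by unfold_locales
  have top_le: "word_length Wr gens (wr_top H G x) \<le> word_length G S x" if "x \<in> carrier G" for x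
    using top.word_length_image_le[OF S_subset] that S_generates by (auto simp: wr_gens_def)
  have base_le: "word_length Wr gens (wr_base H G a) \<le> 1"
  proof (cases "a = \<one>\<^bsub>H\<^esub>")
    case True
    then have "wr_base H G a = \<one>\<^bsub>Wr\<^esub>"
      by (auto simp: wr_base_def wreath_one)
    then show ?thesis by (simp add: Wr.word_length_one)
  next
    case False
    then show ?thesis
      using a Wr.word_length_letter[OF wr_gens_subset[OF S_subset]] by (auto simp: wr_gens_def)
  qed
  have inv_le: "word_length G S (inv\<^bsub>G\<^esub> g) \<le> word_length G S g"
    using G.word_length_inv_le[OF S_subset] g S_generates by simp
  have mem: "wr_top H G g \<in> carrier Wr" "wr_base H G a \<in> carrier Wr"
    "wr_top H G (inv\<^bsub>G\<^esub> g) \<in> carrier Wr"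
    using g a wr_top_hom wr_base_mem by (auto simp: hom_def)
  have "word_length Wr gens (lamp_config a {g})
      \<le> word_length Wr gens (wr_top H G g \<otimes>\<^bsub>Wr\<^esub> wr_base H G a)
        + word_length Wr gens (wr_top H G (inv\<^bsub>G\<^esub> g))"
    unfolding single_lamp_eq[OF g a] using mem by (intro word_length_wreath_mult_le) auto
  also have "\<dots> \<le> word_length Wr gens (wr_top H G g) + word_length Wr gens (wr_base H G a)
        + word_length Wr gens (wr_top H G (inv\<^bsub>G\<^esub> g))"
    using word_length_wreath_mult_le[OF mem(1,2)] by simp
  also have "\<dots> \<le> 2 * word_length G S g + 1"
    using top_le[OF g] top_le[of "inv\<^bsub>G\<^esub> g"] g base_le inv_le by simp
  finally show ?thesis .
qed

lemma word_length_lamps_le: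
  assumes "finite P" "lamp_support F \<subseteq> P" "(F, \<one>\<^bsub>G\<^esub>) \<in> carrier Wr"
    and "\<forall>g\<in>P. word_length G S g \<le> K"
  shows "word_length Wr gens (F, \<one>\<^bsub>G\<^esub>) \<le> card P * (2 * K + 1)"
  using assms
proof (induction P arbitrary: F rule: finite_induct)
  case empty
  then have "(F, \<one>\<^bsub>G\<^esub>) = \<one>\<^bsub>Wr\<^esub>"
    by (auto simp: lamp_support_def wreath_one mem_wreath_carrier intro!: ext)
  then show ?case by (simp add: Wr.word_length_one)
next
  case (insert g P)
  show ?case
  proof (cases "g \<in> lamp_support F")
    case True
    then have g: "g \<in> carrier G" "F g \<in> carrier H"
      using insert.prems by (auto simp: lamp_support_def mem_wreath_carrier)
    have "lamp_support (F(g := \<one>\<^bsub>H\<^esub>)) \<subseteq> P"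
      using insert.prems(1) by (auto simp: lamp_support_def)
    then have rest: "word_length Wr gens (F(g := \<one>\<^bsub>H\<^esub>), \<one>\<^bsub>G\<^esub>) \<le> card P * (2 * K + 1)"
      using insert.IH insert.prems lamps_remove_point_mem by blast
    have single: "word_length Wr gens (lamp_config (F g) {g}) \<le> 2 * K + 1"
      using word_length_single_lamp_le[OF g] insert.prems(3) by fastforce
    have "lamp_config (F g) {g} \<in> carrier Wr"
      using single_lamp_mem_generate[OF g] generate_wreath by blast
    then have "word_length Wr gens (F, \<one>\<^bsub>G\<^esub>)
        \<le> word_length Wr gens (F(g := \<one>\<^bsub>H\<^esub>), \<one>\<^bsub>G\<^esub>) + word_length Wr gens (lamp_config (F g) {g})"
      using word_length_wreath_mult_le[OF lamps_remove_point_mem[OF insert.prems(2)]]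
      by (subst lamps_remove_point[OF insert.prems(2) g(1)]) blast
    then show ?thesis
      using rest single insert.hyps by simp
  next
    case False
    then have "word_length Wr gens (F, \<one>\<^bsub>G\<^esub>) \<le> card P * (2 * K + 1)"
      using insert by blast
    then show ?thesis
      using insert.hyps by simp
  qed
qed

lemma lamp_support_lamps_quotient:
  assumes "(F, \<one>\<^bsub>G\<^esub>) \<in> carrier Wr" "(F', \<one>\<^bsub>G\<^esub>) \<in> carrier Wr"
  shows "lamp_support (fst (inv\<^bsub>Wr\<^esub> (F, \<one>\<^bsub>G\<^esub>) \<otimes>\<^bsub>Wr\<^esub> (F', \<one>\<^bsub>G\<^esub>))) = {\<gamma> \<in> carrier G. F \<gamma> \<noteq> F' \<gamma>}"
  using assms H.inv_solve_left'[of _ "F _" "F' _"]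
  by (auto simp: inv_lamps_mult lamp_support_def mem_wreath_carrier)

lemma card_lamps_diff_le_word_dist:
  assumes "(F, \<one>\<^bsub>G\<^esub>) \<in> carrier Wr" "(F', \<one>\<^bsub>G\<^esub>) \<in> carrier Wr"
  shows "real (card {\<gamma> \<in> carrier G. F \<gamma> \<noteq> F' \<gamma>}) \<le> word_dist Wr gens (F, \<one>\<^bsub>G\<^esub>) (F', \<one>\<^bsub>G\<^esub>)"
  using card_lamp_support_le_word_length[OF S_subset, of "inv\<^bsub>Wr\<^esub> (F, \<one>\<^bsub>G\<^esub>) \<otimes>\<^bsub>Wr\<^esub> (F', \<one>\<^bsub>G\<^esub>)"]
    lamp_support_lamps_quotient[OF assms] assms generate_wreath
  by (simp add: word_dist_def)

lemma word_dist_lamps_le: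
  assumes "(F, \<one>\<^bsub>G\<^esub>) \<in> carrier Wr" "(F', \<one>\<^bsub>G\<^esub>) \<in> carrier Wr"
    and "finite P" "{\<gamma> \<in> carrier G. F \<gamma> \<noteq> F' \<gamma>} \<subseteq> P" "\<forall>g\<in>P. word_length G S g \<le> K"
  shows "word_dist Wr gens (F, \<one>\<^bsub>G\<^esub>) (F', \<one>\<^bsub>G\<^esub>) \<le> card P * (2 * K + 1)"
proof -
  obtain Q where Q: "inv\<^bsub>Wr\<^esub> (F, \<one>\<^bsub>G\<^esub>) \<otimes>\<^bsub>Wr\<^esub> (F', \<one>\<^bsub>G\<^esub>) = (Q, \<one>\<^bsub>G\<^esub>)"
    using inv_lamps_mult[OF assms(1)] by blast
  have "(Q, \<one>\<^bsub>G\<^esub>) \<in> carrier Wr"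
    using assms(1,2) Q[symmetric] by simp
  moreover have "lamp_support Q \<subseteq> P"
    using lamp_support_lamps_quotient[OF assms(1,2)] Q assms(4) by simp
  ultimately have "word_length Wr gens (Q, \<one>\<^bsub>G\<^esub>) \<le> card P * (2 * K + 1)"
    using word_length_lamps_le[OF assms(3) _ _ assms(5)] by blast
  then have "real (word_length Wr gens (Q, \<one>\<^bsub>G\<^esub>)) \<le> real (card P * (2 * K + 1))"
    by (simp only: of_nat_le_iff)
  then show ?thesis
    using Q by (simp add: word_dist_def)
qed

end

section \<open>The discrete Hex lemma\<close>

definition grid :: "nat \<Rightarrow> nat \<Rightarrow> (nat \<Rightarrow> nat) set" where
  "grid d p = {x. (\<forall>j<d. x j \<le> p) \<and> (\<forall>j\<ge>d. x j = 0)}"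

definition grid_near :: "(nat \<Rightarrow> nat) \<Rightarrow> (nat \<Rightarrow> nat) \<Rightarrow> bool" where
  "grid_near x y \<longleftrightarrow> (\<forall>j. x j \<le> y j + 2 \<and> y j \<le> x j + 2)"

lemma hex_lemma:
  fixes c :: "(nat \<Rightarrow> nat) \<Rightarrow> nat" and W :: "nat \<Rightarrow> (nat \<Rightarrow> nat) set"
  assumes p: "0 < p" and colours: "\<And>x. x \<in> grid d p \<Longrightarrow> c x < d"
    and W_grid: "\<And>i. W i \<subseteq> grid d p"
    \<comment> \<open>W i is meant to be the set of points reachable from the face x i \<le> 1 by near steps
      inside the colour class i\<close>
    and W_start: "\<And>x. x \<in> grid d p \<Longrightarrow> x (c x) \<le> 1 \<Longrightarrow> x \<in> W (c x)"
    and W_step: "\<And>u v. u \<in> W (c v) \<Longrightarrow> v \<in> grid d p \<Longrightarrow> grid_near u v \<Longrightarrow> v \<in> W (c v)"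
  obtains i u where "i < d" "u \<in> W i" "p \<le> u i + 1"
proof (rule ccontr)
  note found = that
  assume "\<not> thesis"
  then have short: "u i + 1 < p" if "i < d" "u \<in> W i" for i u
    using found that by (meson not_le)
  define label where
    "label x i = (if x i = 0 \<or> (\<exists>u\<in>W i. \<forall>j<d. x j \<le> u j + 1 \<and> u j \<le> x j + 1) then 0 else 1::nat)"
    for x i
  obtain q where q: "\<forall>i<d. q i < p"
    and cube: "\<forall>i<d. \<exists>r s. (\<forall>j<d. q j \<le> r j \<and> r j \<le> q j + 1) \<and> (\<forall>j<d. q j \<le> s j \<and> s j \<le> q j + 1)
      \<and> label r i \<noteq> label s i"
  proof (rule kuhn_lemma[of p d label])
    show "\<forall>x. (\<forall>i<d. x i \<le> p) \<longrightarrow> (\<forall>i<d. x i = p \<longrightarrow> label x i = 1)"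
      using short p by (fastforce simp: label_def)
  qed (use p in \<open>auto simp: label_def\<close>)
  define v where "v j = (if j < d then q j else 0)" for j
  have v: "v \<in> grid d p"
    using q by (auto simp: grid_def v_def less_imp_le)
  define i where "i = c v"
  have i: "i < d"
    using colours[OF v] by (simp add: i_def)
  \<comment> \<open>A corner of the cube labelled 0 forces v into W i, which forces label 0 on the whole cube.\<close>
  have v_W: "v \<in> W i" if r: "\<forall>j<d. q j \<le> r j \<and> r j \<le> q j + 1" and "label r i = 0" for r
  proof (cases "r i = 0")
    case True
    moreover have "q i \<le> r i"
      using r i by blast
    ultimately show ?thesis
      using W_start[OF v] i by (simp add: i_def v_def)
  next
    case False
    then obtain u where u: "u \<in> W i" "\<forall>j<d. r j \<le> u j + 1 \<and> u j \<le> r j + 1"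
      using \<open>label r i = 0\<close> by (auto simp: label_def split: if_splits)
    have "grid_near u v"
      using u r W_grid v by (fastforce simp: grid_near_def grid_def v_def)
    then show ?thesis
      using W_step[OF _ v] u(1) by (simp add: i_def)
  qed
  have label_0: "label r i = 0" if "\<forall>j<d. q j \<le> r j \<and> r j \<le> q j + 1" "v \<in> W i" for r
    using that by (fastforce simp: label_def v_def)
  obtain r s where "\<forall>j<d. q j \<le> r j \<and> r j \<le> q j + 1" "\<forall>j<d. q j \<le> s j \<and> s j \<le> q j + 1"
    "label r i \<noteq> label s i"
    using cube i by blast
  then show False
    using v_W label_0 by (metis label_def)
qed

section \<open>Grids obstruct linear control functions\<close>

lemma r_connected_refl: "x \<in> Y \<Longrightarrow> r_connected d r Y x x"
  unfolding r_connected_def by (intro exI[of _ "[x]"]) auto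

lemma r_connected_snoc:
  assumes "r_connected d r Y x y" "z \<in> Y" "d y z < r"
  shows "r_connected d r Y x z"
proof -
  obtain ps where ps: "ps \<noteq> []" "hd ps = x" "last ps = y" "set ps \<subseteq> Y"
    "\<forall>i. Suc i < length ps \<longrightarrow> d (ps ! i) (ps ! Suc i) < r"
    using assms(1) unfolding r_connected_def by blast
  have "d ((ps @ [z]) ! i) ((ps @ [z]) ! Suc i) < r" if "Suc i < length (ps @ [z])" for i
  proof (cases "Suc i < length ps")
    case True
    then show ?thesis using ps(5) by (simp add: nth_append)
  next
    case False
    then have "i = length ps - 1"
      using that by simp
    then show ?thesis
      using ps(1,3) assms(3) by (simp add: nth_append last_conv_nth)
  qed
  then show ?thesis
    unfolding r_connected_def using ps assms(2) by (intro exI[of _ "ps @ [z]"]) auto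
qed

lemma control_function_grid_bound:
  fixes \<delta> :: "'a \<Rightarrow> 'a \<Rightarrow> real" and \<phi> :: "(nat \<Rightarrow> nat) \<Rightarrow> 'a"
  assumes cf: "control_function M \<delta> n D" and r: "0 < r" and p: "0 < p"
    and \<phi>: "\<phi> ` grid (Suc n) p \<subseteq> M"
    and near: "\<And>x y. x \<in> grid (Suc n) p \<Longrightarrow> y \<in> grid (Suc n) p \<Longrightarrow> grid_near x y \<Longrightarrow>
      \<delta> (\<phi> x) (\<phi> y) < r"
    and far: "\<And>x y i. x \<in> grid (Suc n) p \<Longrightarrow> y \<in> grid (Suc n) p \<Longrightarrow> i \<le> n \<Longrightarrow>
      real (y i - x i) \<le> \<delta> (\<phi> x) (\<phi> y)"
  shows "ereal (real p - 2) \<le> D r"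
proof -
  obtain U where U_cover: "\<forall>x\<in>M. \<exists>i\<le>n. open_ball M \<delta> x r \<subseteq> U i"
    and U_small: "\<forall>i\<le>n. \<forall>x y. r_connected \<delta> r (U i) x y \<longrightarrow> ereal (\<delta> x y) \<le> D r"
    using cf[unfolded control_function_def, rule_format, OF r] by blast
  define c where "c x = (LEAST i. i \<le> n \<and> open_ball M \<delta> (\<phi> x) r \<subseteq> U i)" for x
  have c: "c x \<le> n \<and> open_ball M \<delta> (\<phi> x) r \<subseteq> U (c x)" if "x \<in> grid (Suc n) p" for x
  proof -
    have "\<phi> x \<in> M"
      using \<phi> that by blast
    then have "\<exists>i. i \<le> n \<and> open_ball M \<delta> (\<phi> x) r \<subseteq> U i"
      using U_cover by blast
    then show ?thesis
      unfolding c_def by (rule LeastI_ex)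
  qed
  have \<phi>_U: "\<phi> x \<in> U (c x)" if "x \<in> grid (Suc n) p" for x
    using c[OF that] near[OF that that] \<phi> that by (auto simp: open_ball_def grid_near_def)
  define W where "W i = {u \<in> grid (Suc n) p. \<exists>x\<in>grid (Suc n) p. c x = i \<and> x i \<le> 1 \<and>
    r_connected \<delta> r (U i) (\<phi> x) (\<phi> u)}" for i
  obtain i u where i: "i < Suc n" and u: "u \<in> W i" "p \<le> u i + 1"
  proof (rule hex_lemma[of p "Suc n" c W])
    show "c x < Suc n" if "x \<in> grid (Suc n) p" for x
      using c[OF that] by simp
    show "W i \<subseteq> grid (Suc n) p" for i
      by (auto simp: W_def)
    show "x \<in> W (c x)" if "x \<in> grid (Suc n) p" "x (c x) \<le> 1" for x
      unfolding W_def using that r_connected_refl[OF \<phi>_U[OF that(1)]] by blast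
    show "v \<in> W (c v)" if u: "u \<in> W (c v)" and v: "v \<in> grid (Suc n) p" "grid_near u v" for u v
    proof -
      obtain x where x: "x \<in> grid (Suc n) p" "c x = c v" "x (c v) \<le> 1"
        "r_connected \<delta> r (U (c v)) (\<phi> x) (\<phi> u)" and "u \<in> grid (Suc n) p"
        using u unfolding W_def by blast
      then have "r_connected \<delta> r (U (c v)) (\<phi> x) (\<phi> v)"
        using r_connected_snoc[OF x(4) \<phi>_U[OF v(1)]] near[OF \<open>u \<in> grid (Suc n) p\<close> v] by blast
      then show ?thesis
        unfolding W_def using x v by blast
    qed
  qed (use p that in auto)
  then obtain x where x: "x \<in> grid (Suc n) p" "x i \<le> 1" "r_connected \<delta> r (U i) (\<phi> x) (\<phi> u)"
    and u_grid: "u \<in> grid (Suc n) p"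
    unfolding W_def by blast
  have "real p - 2 \<le> real (u i - x i)"
    using u(2) x(2) by (cases "x i \<le> u i") (auto simp: of_nat_diff)
  also have "\<dots> \<le> \<delta> (\<phi> x) (\<phi> u)"
    using far[OF x(1) u_grid] i by simp
  finally have "ereal (real p - 2) \<le> ereal (\<delta> (\<phi> x) (\<phi> u))"
    by simp
  also have "\<dots> \<le> D r"
    using U_small x(3) i by (simp add: less_Suc_eq_le)
  finally show ?thesis .
qed

section \<open>Embedding grids into the wreath product\<close>

context wreath_word_metric
begin

lemma grid_embedding:
  assumes h: "h \<in> carrier H" "h \<noteq> \<one>\<^bsub>H\<^esub>"
    and B: "B \<subseteq> carrier G" "finite B" "d * p \<le> card B" "\<forall>g\<in>B. word_length G S g \<le> K"
  obtains \<phi> where "\<phi> ` grid d p \<subseteq> carrier Wr"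
    "\<And>x y. x \<in> grid d p \<Longrightarrow> y \<in> grid d p \<Longrightarrow> grid_near x y \<Longrightarrow>
      word_dist Wr gens (\<phi> x) (\<phi> y) \<le> 2 * d * (2 * K + 1)"
    "\<And>x y i. x \<in> grid d p \<Longrightarrow> y \<in> grid d p \<Longrightarrow> i < d \<Longrightarrow>
      real (y i - x i) \<le> word_dist Wr gens (\<phi> x) (\<phi> y)"
proof -
  obtain e where e: "e ` ({..<d} \<times> {..<p}) \<subseteq> B" "inj_on e ({..<d} \<times> {..<p})"
    using card_le_inj[of "{..<d} \<times> {..<p}" B] B by auto
  \<comment> \<open>e arranges d p distinct elements of B in d rows of length p; the grid point x lights the
    first x j lamps of row j.\<close>
  define stair where "stair x = {(j, t). j < d \<and> t < x j}" for x :: "nat \<Rightarrow> nat"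
  define F where "F x \<gamma> = (if \<gamma> \<in> e ` stair x then h else \<one>\<^bsub>H\<^esub>)" for x \<gamma>
  have stair_sub: "stair x \<subseteq> {..<d} \<times> {..<p}" if "x \<in> grid d p" for x
    using that by (fastforce simp: stair_def grid_def)
  then have lit_sub: "e ` stair x \<subseteq> B" if "x \<in> grid d p" for x
    using e(1) that by blast
  have F_mem: "(F x, \<one>\<^bsub>G\<^esub>) \<in> carrier Wr" if "x \<in> grid d p" for x
  proof -
    have "{\<gamma> \<in> carrier G. F x \<gamma> \<noteq> \<one>\<^bsub>H\<^esub>} \<subseteq> B"
      using lit_sub[OF that] by (auto simp: F_def)
    then show ?thesis
      using lit_sub[OF that] B h(1) finite_subset by (fastforce simp: mem_wreath_carrier F_def)
  qed
  have diff: "{\<gamma> \<in> carrier G. F x \<gamma> \<noteq> F y \<gamma>} =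
      e ` (SIGMA j:{..<d}. {min (x j) (y j)..<max (x j) (y j)})"
    if "x \<in> grid d p" "y \<in> grid d p" for x y
  proof -
    have inj: "inj_on e (stair x \<union> stair y)"
      using e(2) stair_sub that by (meson inj_on_subset le_sup_iff)
    have "{\<gamma> \<in> carrier G. F x \<gamma> \<noteq> F y \<gamma>} = (e ` stair x - e ` stair y) \<union> (e ` stair y - e ` stair x)"
      using lit_sub that B(1) h(2) by (auto simp: F_def)
    also have "\<dots> = e ` ((stair x - stair y) \<union> (stair y - stair x))"
      using inj_on_image_set_diff[OF inj, of "stair x" "stair y"]
        inj_on_image_set_diff[OF inj, of "stair y" "stair x"] by auto
    also have "(stair x - stair y) \<union> (stair y - stair x) = (SIGMA j:{..<d}. {min (x j) (y j)..<max (x j) (y j)})"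
      by (auto simp: stair_def)
    finally show ?thesis .
  qed
  have sigma_sub: "(SIGMA j:{..<d}. {min (x j) (y j)..<max (x j) (y j)}) \<subseteq> {..<d} \<times> {..<p}"
    if "x \<in> grid d p" "y \<in> grid d p" for x y
    using that by (fastforce simp: grid_def)
  have diff_sub: "{\<gamma> \<in> carrier G. F x \<gamma> \<noteq> F y \<gamma>} \<subseteq> B"
    if "x \<in> grid d p" "y \<in> grid d p" for x y
    unfolding diff[OF that] using e(1) sigma_sub[OF that] by blast
  have card_diff: "card {\<gamma> \<in> carrier G. F x \<gamma> \<noteq> F y \<gamma>} = (\<Sum>j<d. max (x j) (y j) - min (x j) (y j))"
    if "x \<in> grid d p" "y \<in> grid d p" for x y
  proof -
    have "inj_on e (SIGMA j:{..<d}. {min (x j) (y j)..<max (x j) (y j)})"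
      using e(2) sigma_sub[OF that] inj_on_subset by blast
    then show ?thesis
      by (simp add: diff[OF that] card_image)
  qed
  show thesis
  proof (rule that[of "\<lambda>x. (F x, \<one>\<^bsub>G\<^esub>)"])
    show "(\<lambda>x. (F x, \<one>\<^bsub>G\<^esub>)) ` grid d p \<subseteq> carrier Wr"
      using F_mem by blast
  next
    fix x y assume xy: "x \<in> grid d p" "y \<in> grid d p" and near: "grid_near x y"
    have "max (x j) (y j) - min (x j) (y j) \<le> 2" for j
      using near[unfolded grid_near_def, rule_format, of j] by (auto simp: max_def min_def)
    then have "(\<Sum>j<d. max (x j) (y j) - min (x j) (y j)) \<le> (\<Sum>j<d. 2)"
      by (intro sum_mono)
    then have "card {\<gamma> \<in> carrier G. F x \<gamma> \<noteq> F y \<gamma>} \<le> 2 * d"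
      using card_diff[OF xy] by simp
    have "word_dist Wr gens (F x, \<one>\<^bsub>G\<^esub>) (F y, \<one>\<^bsub>G\<^esub>)
        \<le> card {\<gamma> \<in> carrier G. F x \<gamma> \<noteq> F y \<gamma>} * (2 * K + 1)"
      using diff_sub[OF xy] B(2,4) finite_subset
      by (intro word_dist_lamps_le[OF F_mem[OF xy(1)] F_mem[OF xy(2)] _ order_refl]) blast+
    also have "\<dots> \<le> 2 * d * (2 * K + 1)"
      using \<open>card {\<gamma> \<in> carrier G. F x \<gamma> \<noteq> F y \<gamma>} \<le> 2 * d\<close>
      by (intro of_nat_mono mult_le_mono1)
    finally show "word_dist Wr gens (F x, \<one>\<^bsub>G\<^esub>) (F y, \<one>\<^bsub>G\<^esub>) \<le> 2 * d * (2 * K + 1)" .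
  next
    fix x y i assume xy: "x \<in> grid d p" "y \<in> grid d p" and i: "i < d"
    have "y i - x i \<le> max (x i) (y i) - min (x i) (y i)"
      by simp
    also have "\<dots> \<le> (\<Sum>j<d. max (x j) (y j) - min (x j) (y j))"
      using i by (intro member_le_sum) auto
    finally show "real (y i - x i) \<le> word_dist Wr gens (F x, \<one>\<^bsub>G\<^esub>) (F y, \<one>\<^bsub>G\<^esub>)"
      using card_lamps_diff_le_word_dist[OF F_mem[OF xy(1)] F_mem[OF xy(2)]] card_diff[OF xy]
      by linarith
  qed
qed

lemma no_linear_control_function:
  assumes h: "h \<in> carrier H" "h \<noteq> \<one>\<^bsub>H\<^esub>" and growth: "\<not> growth_linearly_bounded G S"
    and C: "0 < C"
  shows "\<not> control_function (carrier Wr) (word_dist Wr gens) n (\<lambda>r. ereal (C * r))"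
proof
  assume cf: "control_function (carrier Wr) (word_dist Wr gens) n (\<lambda>r. ereal (C * r))"
  define d where "d = Suc n"
  have "0 \<le> 4 * real d * real d * C"
    using C by simp
  then obtain K B where B: "B \<subseteq> carrier G" "finite B" "\<forall>g\<in>B. word_length G S g \<le> K"
    and big: "4 * real d * real d * C * real K + real d * (C * (2 * real d + 1) + 4) < card B"
    by (rule not_linearly_bounded_obtain_ball[OF growth])
  \<comment> \<open>r exceeds the distance between images of near grid points, and p - 2 exceeds C r.\<close>
  define r where "r = real (2 * d * (2 * K + 1) + 1)"
  define p where "p = nat \<lceil>C * r\<rceil> + 3"
  have r: "0 < r"
    unfolding r_def of_nat_0_less_iff by simp
  have p: "C * r + 3 \<le> real p" "real p \<le> C * r + 4"
    using C r by (simp_all add: p_def) linarith+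
  have "real d * real p \<le> real d * (C * r + 4)"
    using p(2) by (simp add: mult_left_mono)
  also have "\<dots> = 4 * real d * real d * C * real K + real d * (C * (2 * real d + 1) + 4)"
    by (simp add: r_def algebra_simps)
  finally have "real (d * p) < real (card B)"
    using big by simp
  then have "d * p \<le> card B"
    by (metis less_imp_le of_nat_less_iff)
  then obtain \<phi> where \<phi>: "\<phi> ` grid d p \<subseteq> carrier Wr"
    and near: "\<And>x y. x \<in> grid d p \<Longrightarrow> y \<in> grid d p \<Longrightarrow> grid_near x y \<Longrightarrow>
      word_dist Wr gens (\<phi> x) (\<phi> y) \<le> 2 * d * (2 * K + 1)"
    and far: "\<And>x y i. x \<in> grid d p \<Longrightarrow> y \<in> grid d p \<Longrightarrow> i < d \<Longrightarrow>
      real (y i - x i) \<le> word_dist Wr gens (\<phi> x) (\<phi> y)"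
    using grid_embedding[OF h B(1,2) _ B(3)] by blast
  have "ereal (real p - 2) \<le> ereal (C * r)"
  proof (rule control_function_grid_bound[OF cf r])
    show "0 < p" by (simp add: p_def)
    show "\<phi> ` grid (Suc n) p \<subseteq> carrier Wr"
      using \<phi> by (simp add: d_def)
    show "word_dist Wr gens (\<phi> x) (\<phi> y) < r"
      if "x \<in> grid (Suc n) p" "y \<in> grid (Suc n) p" "grid_near x y" for x y
      using near[of x y] that by (simp add: d_def r_def)
    show "real (y i - x i) \<le> word_dist Wr gens (\<phi> x) (\<phi> y)"
      if "x \<in> grid (Suc n) p" "y \<in> grid (Suc n) p" "i \<le> n" for x y i
      using far[of x y i] that by (simp add: d_def)
  qed
  then show False
    using p(1) by simp
qed

end

theorem corollary5p2:
  fixes G :: "('g, 'x) monoid_scheme" and H :: "('h, 'y) monoid_scheme" and S :: "'g set"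
  assumes "group G" and "finite S" and "S \<subseteq> carrier G" and "generate G S = carrier G"
    and "group H" and "finite (carrier H)" and "carrier H \<noteq> {\<one>\<^bsub>H\<^esub>}"
    and "\<not> growth_linearly_bounded G S"
  shows "dim_AN (carrier (wreath H G)) (word_dist (wreath H G) (wr_gens H G S)) = \<infinity>"
proof -
  interpret wreath_word_metric G H S
    using assms(1,3,4,5)
    by (simp add: wreath_word_metric_def wreath_product_def wreath_word_metric_axioms_def)
  obtain h where "h \<in> carrier H" "h \<noteq> \<one>\<^bsub>H\<^esub>"
    using assms(7) H.one_closed by blast
  then have "\<nexists>n. \<exists>C>0. control_function (carrier Wr) (word_dist Wr gens) n (\<lambda>r. ereal (C * r))"
    using no_linear_control_function assms(8) by blast
  then show ?thesis
    by (simp add: dim_AN_def)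
qed

end
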